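(* Fix $\alpha\in(0,1/2)$ and $q_1,q_3\in(0,1)$. Define $m^*(3/4,3/4)=16\alpha$, $m^*(3/4,1/4)=m^*(1/4,3/4)=\frac{8(1-2\alpha)}{3}$, $m^*(1/4,1/4)=\frac{16\alpha}{9}$, $m^*=\frac{16(4\alpha+3)}{9}$, $\overline{q}^*=\frac{8\alpha+3}{8\alpha+6}$, $\overline{\lambda}^*=1/m^*$, $$\overline{q}=\frac{1}{m^*}\Big[\big(m^*(\tfrac34,\tfrac34)+m^*(\tfrac34,\tfrac14)\big)q_3+\big(m^*(\tfrac14,\tfrac34)+m^*(\tfrac14,\tfrac14)\big)q_1\Big],$$ $$\overline{\lambda}=\frac{1}{m^*}\Big(m^*(\tfrac34,\tfrac34)\tfrac{1-q_3}{4}+m^*(\tfrac34,\tfrac14)\tfrac{3(1-q_3)}{4}+m^*(\tfrac14,\tfrac34)\tfrac{1-q_1}{4}+m^*(\tfrac14,\tfrac14)\tfrac{3(1-q_1)}{4}\Big),$$ $M=\frac{2(4\alpha+1)}{3(1-q_3)}+\frac{2(3-4\alpha)}{3(1-q_1)}$ and $Q=\big(q_3\frac{2(4\alpha+1)}{3(1-q_3)}+q_1\frac{2(3-4\alpha)}{3(1-q_1)}\big)/M$. Suppose either (1) $\alpha>1/4$, $(12\alpha+3)q_3+(3-4\alpha)q_1>8\alpha+3$ and $\frac{4\alpha+1}{1-q_3}+\frac{3-4\alpha}{1-q_1}<\frac{8(4\alpha+3)}{3}$; or (2) $\alpha\le 1/4$, $6q_3+2q_1>5$ and $\frac{4\alpha+1}{1-q_3}+\frac{3-4\alpha}{1-q_1}<\frac{8(4\alpha+3)}{3}$.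 Then $\overline{q}>\overline{q}^*$ and $\overline{\lambda}<\overline{\lambda}^*$, while the treatment's steady-state performance is worse than the status quo's: $M<m^*$ and $Q<\overline{q}^*$.
   Context: Model: user types $(x,e)\in\{1/4,3/4\}^2$ with per-period inflow masses $\alpha$ for $(3/4,3/4)$ and $(1/4,1/4)$ and $1/2-\alpha$ for $(3/4,1/4)$ and $(1/4,3/4)$; an algorithm gives quality $q(x)\in(0,1)$ to segment $x$ and a type-$(x,e)$ user churns each period with probability $(1-q(x))(1-e)$; the steady-state mass of type $(x,e)$ is $F(x,e)/((1-q(x))(1-e))$. The status quo is $q^*(x)=x$ with steady-state masses $m^*(x,e)$, total $m^*$, ARQ $\overline{q}^*$ and churn rate $\overline{\lambda}^*$. The treatment has $q(1/4)=q_1,q(3/4)=q_3$; $\overline{q},\overline{\lambda}$ are its ARQ and churn rate observed in a one-period experiment on the status quo population; $M,Q$ are its own steady-state total population and ARQ. *)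

theory Defs
  imports Complex_Main
begin

definition mstar :: "real \<Rightarrow> real \<Rightarrow> real \<Rightarrow> real" where
  "mstar \<alpha> x e =
     (if x = 3/4 \<and> e = 3/4 then 16*\<alpha>
      else if x = 1/4 \<and> e = 1/4 then 16*\<alpha>/9
      else 8*(1 - 2*\<alpha>)/3)"

definition mstar_total :: "real \<Rightarrow> real" where
  "mstar_total \<alpha> = 16*(4*\<alpha> + 3)/9"

definition qbar_star :: "real \<Rightarrow> real" where
  "qbar_star \<alpha> = (8*\<alpha> + 3)/(8*\<alpha> + 6)"

definition lambar_star :: "real \<Rightarrow> real" where
  "lambar_star \<alpha> = 1 / mstar_total \<alpha>"

definition qbar :: "real \<Rightarrow> real \<Rightarrow> real \<Rightarrow> real" where
  "qbar \<alpha> q1 q3 = (1 / mstar_total \<alpha>) *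
     ((mstar \<alpha> (3/4) (3/4) + mstar \<alpha> (3/4) (1/4)) * q3
      + (mstar \<alpha> (1/4) (3/4) + mstar \<alpha> (1/4) (1/4)) * q1)"

definition lambar :: "real \<Rightarrow> real \<Rightarrow> real \<Rightarrow> real" where
  "lambar \<alpha> q1 q3 = (1 / mstar_total \<alpha>) *
     (mstar \<alpha> (3/4) (3/4) * ((1 - q3)/4) + mstar \<alpha> (3/4) (1/4) * (3*(1 - q3)/4)
      + mstar \<alpha> (1/4) (3/4) * ((1 - q1)/4) + mstar \<alpha> (1/4) (1/4) * (3*(1 - q1)/4))"

definition Mtreat :: "real \<Rightarrow> real \<Rightarrow> real \<Rightarrow> real" where
  "Mtreat \<alpha> q1 q3 = 2*(4*\<alpha> + 1)/(3*(1 - q3)) + 2*(3 - 4*\<alpha>)/(3*(1 - q1))"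

definition Qtreat :: "real \<Rightarrow> real \<Rightarrow> real \<Rightarrow> real" where
  "Qtreat \<alpha> q1 q3 = (q3 * (2*(4*\<alpha> + 1)/(3*(1 - q3))) + q1 * (2*(3 - 4*\<alpha>)/(3*(1 - q1))))
                     / Mtreat \<alpha> q1 q3"

end

theory Submission
  imports Defs
begin

text \<open>Write \<open>A = 4\<alpha> + 1\<close>, \<open>B = 3 - 4\<alpha> = 4 - A\<close>, \<open>u = 1 - q3\<close>, \<open>v = 1 - q1\<close>. The two
  experimental improvements are the half-planes \<open>3Au + Bv < 3\<close> and \<open>6u + 2v < 3\<close>, the
  steady-state condition \<open>M < m*\<close> is the convex region \<open>A/u + B/v < 8(A+2)/3\<close>, and all three
  boundaries pass through \<open>(1/4, 3/4)\<close>. By convexity the region lies in the tangent half-plane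
  at that point, which on the side \<open>v > 3u\<close> of the diagonal misses both improvement half-planes.
  On the other side the two half-planes are nested, in the direction given by the sign of
  \<open>A - 2\<close>, so either improvement forces the other. Finally the ARQ of a steady state is
  \<open>1 - (8/3)/population\<close>, so \<open>Q < q*\<close> is equivalent to \<open>M < m*\<close>.\<close>

lemma tangent_le_inverse:
  fixes t u :: real
  assumes "0 < t" "0 < u"
  shows "(2*t - u) / t^2 \<le> 1 / u"
proof -
  have "1/u - (2*t - u) / t^2 = (t - u)^2 / (u * t^2)"
    using assms by (simp add: field_simps power2_eq_square)
  also have "\<dots> \<ge> 0" using assms by simp
  finally show ?thesis by simp
qed

lemma tangent_halfplane:
  fixes A B u v :: real
  assumes "0 \<le> A" "0 \<le> B" "B = 4 - A" "0 < u" "0 < v" "A/u + B/v < 8*(A+2)/3"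
  shows "3*(A+2) < 18*A*u + 2*B*v"
proof -
  have "A * ((2*(1/4) - u) / (1/4)^2) \<le> A/u"
    using mult_left_mono[OF tangent_le_inverse[of "1/4" u]] assms by simp
  moreover have "B * ((2*(3/4) - v) / (3/4)^2) \<le> B/v"
    using mult_left_mono[OF tangent_le_inverse[of "3/4" v]] assms by simp
  ultimately have "A * ((2*(1/4) - u) / (1/4)^2) + B * ((2*(3/4) - v) / (3/4)^2) < 8*(A+2)/3"
    using assms(6) by linarith
  then show ?thesis unfolding \<open>B = 4 - A\<close> by (simp add: field_simps)
qed

lemma improvements_fail_above_diagonal:
  fixes A B u v :: real
  assumes "1 < A" "0 < B" "B = 4 - A" "3*(A+2) < 18*A*u + 2*B*v" "3*u < v"
  shows "3 < 3*A*u + B*v" and "3 < 6*u + 2*v"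
proof -
  have "(A+2) * (3*A*u + B*v - 3) = (18*A*u + 2*B*v - 3*(A+2)) + A*B*(v - 3*u)"
    unfolding \<open>B = 4 - A\<close> by (simp add: algebra_simps)
  moreover have "0 < A*B*(v - 3*u)" using assms by simp
  ultimately have "0 < (A+2) * (3*A*u + B*v - 3)" using assms(4) by linarith
  then show "3 < 3*A*u + B*v" using \<open>1 < A\<close> by (simp add: zero_less_mult_iff)
  have "(A+2) * (6*u + 2*v - 3) = (18*A*u + 2*B*v - 3*(A+2)) + 4*(A-1)*(v - 3*u)"
    unfolding \<open>B = 4 - A\<close> by (simp add: algebra_simps)
  moreover have "0 < 4*(A-1)*(v - 3*u)" using assms by simp
  ultimately have "0 < (A+2) * (6*u + 2*v - 3)" using assms(4) by linarith
  then show "3 < 6*u + 2*v" using \<open>1 < A\<close> by (simp add: zero_less_mult_iff)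
qed

lemma improvements_coincide:
  fixes A B u v :: real
  assumes "1 < A" "0 < B" "B = 4 - A" "0 < u" "0 < v" "A/u + B/v < 8*(A+2)/3"
    and "(2 < A \<and> 3*A*u + B*v < 3) \<or> (A \<le> 2 \<and> 6*u + 2*v < 3)"
  shows "3*A*u + B*v < 3 \<and> 6*u + 2*v < 3"
proof -
  have "3*(A+2) < 18*A*u + 2*B*v" using tangent_halfplane assms by simp
  then have below: "v \<le> 3*u"
    using improvements_fail_above_diagonal[of A B u v] assms by force
  have nested: "3*A*u + B*v - 3 = (6*u + 2*v - 3) + (A-2)*(3*u - v)"
    unfolding \<open>B = 4 - A\<close> by (simp add: algebra_simps)
  show ?thesis
  proof (cases "2 < A")
    case True
    then have "0 \<le> (A-2)*(3*u - v)" using below by simp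
    then show ?thesis using nested assms(7) True by linarith
  next
    case False
    then have "(A-2)*(3*u - v) \<le> 0" using below by (simp add: mult_nonpos_nonneg)
    then show ?thesis using nested assms(7) False by linarith
  qed
qed

lemma qbar_gt_qbar_star_iff:
  assumes "0 < 4*\<alpha> + 3"
  shows "qbar \<alpha> q1 q3 > qbar_star \<alpha> \<longleftrightarrow> (12*\<alpha> + 3)*q3 + (3 - 4*\<alpha>)*q1 > 8*\<alpha> + 3"
proof -
  have "qbar \<alpha> q1 q3 = ((12*\<alpha> + 3)*q3 + (3 - 4*\<alpha>)*q1) / (8*\<alpha> + 6)"
    unfolding qbar_def mstar_def mstar_total_def using assms by (simp add: field_simps)
  moreover have "0 < 8*\<alpha> + 6" using assms by simp
  ultimately show ?thesis unfolding qbar_star_def by (simp add: divide_less_cancel)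
qed

lemma lambar_lt_lambar_star_iff:
  assumes "0 < 4*\<alpha> + 3"
  shows "lambar \<alpha> q1 q3 < lambar_star \<alpha> \<longleftrightarrow> 6*q3 + 2*q1 > 5"
proof -
  have "lambar \<alpha> q1 q3 = (2*(1 - q3) + 2*(1 - q1)/3) * lambar_star \<alpha>"
    unfolding lambar_def lambar_star_def mstar_def mstar_total_def using assms
    by (simp add: field_simps)
  moreover have "0 < lambar_star \<alpha>" unfolding lambar_star_def mstar_total_def using assms by simp
  ultimately have "lambar \<alpha> q1 q3 < lambar_star \<alpha> \<longleftrightarrow> 2*(1 - q3) + 2*(1 - q1)/3 < 1"
    by (simp add: mult_less_cancel_right2)
  then show ?thesis by (simp add: field_simps)
qed

lemma Mtreat_lt_mstar_total_iff:
  "Mtreat \<alpha> q1 q3 < mstar_total \<alpha> \<longleftrightarrow>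
     (4*\<alpha> + 1)/(1 - q3) + (3 - 4*\<alpha>)/(1 - q1) < 8*(4*\<alpha> + 3)/3"
proof -
  define X where "X = (4*\<alpha> + 1)/(1 - q3) + (3 - 4*\<alpha>)/(1 - q1)"
  have "Mtreat \<alpha> q1 q3 = 2/3 * X"
    unfolding Mtreat_def X_def times_divide_times_eq[symmetric] by (rule distrib_left[symmetric])
  then show ?thesis unfolding mstar_total_def X_def[symmetric] by auto
qed

text \<open>The steady-state mass lost per period to low quality, \<open>\<Sum> (1 - q x) m(x,e)\<close>, is
  \<open>\<Sum> F(x,e)/(1 - e) = 8/3\<close> whatever the algorithm.\<close>

lemma Qtreat_eq:
  assumes "q1 \<noteq> 1" "q3 \<noteq> 1" "Mtreat \<alpha> q1 q3 \<noteq> 0"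
  shows "Qtreat \<alpha> q1 q3 = 1 - (8/3) / Mtreat \<alpha> q1 q3"
proof -
  have q_times: "q * (c / (3*(1 - q))) = c / (3*(1 - q)) - c/3" if "q \<noteq> 1" for q c :: real
    using that by (simp add: field_simps)
  have "q3 * (2*(4*\<alpha> + 1)/(3*(1 - q3))) + q1 * (2*(3 - 4*\<alpha>)/(3*(1 - q1)))
          = Mtreat \<alpha> q1 q3 - 8/3"
    unfolding Mtreat_def using q_times assms(1,2) by simp (simp add: field_simps)
  then show ?thesis unfolding Qtreat_def using assms(3) by (simp add: diff_divide_distrib)
qed

lemma qbar_star_eq:
  assumes "4*\<alpha> + 3 \<noteq> 0"
  shows "qbar_star \<alpha> = 1 - (8/3) / mstar_total \<alpha>"
  unfolding qbar_star_def mstar_total_def using assms by (simp add: field_simps)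

lemma Qtreat_lt_qbar_star_iff:
  assumes "0 < 4*\<alpha> + 3" "q1 \<noteq> 1" "q3 \<noteq> 1" "0 < Mtreat \<alpha> q1 q3"
  shows "Qtreat \<alpha> q1 q3 < qbar_star \<alpha> \<longleftrightarrow> Mtreat \<alpha> q1 q3 < mstar_total \<alpha>"
proof -
  have "Qtreat \<alpha> q1 q3 < qbar_star \<alpha> \<longleftrightarrow> (8/3) / mstar_total \<alpha> < (8/3) / Mtreat \<alpha> q1 q3"
    using Qtreat_eq[of q1 q3 \<alpha>] qbar_star_eq[of \<alpha>] assms by simp
  moreover have "0 < mstar_total \<alpha>" unfolding mstar_total_def using assms(1) by simp
  ultimately show ?thesis using assms(4) by (simp add: field_simps)
qed

theorem proposition2:
  fixes \<alpha> q1 q3 :: real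
  assumes "0 < \<alpha>" "\<alpha> < 1/2"
    and "0 < q1" "q1 < 1" "0 < q3" "q3 < 1"
    and "(\<alpha> > 1/4 \<and> (12*\<alpha> + 3)*q3 + (3 - 4*\<alpha>)*q1 > 8*\<alpha> + 3
            \<and> (4*\<alpha> + 1)/(1 - q3) + (3 - 4*\<alpha>)/(1 - q1) < 8*(4*\<alpha> + 3)/3)
       \<or> (\<alpha> \<le> 1/4 \<and> 6*q3 + 2*q1 > 5
            \<and> (4*\<alpha> + 1)/(1 - q3) + (3 - 4*\<alpha>)/(1 - q1) < 8*(4*\<alpha> + 3)/3)"
  shows "qbar \<alpha> q1 q3 > qbar_star \<alpha> \<and> lambar \<alpha> q1 q3 < lambar_star \<alpha>
         \<and> Mtreat \<alpha> q1 q3 < mstar_total \<alpha> \<and> Qtreat \<alpha> q1 q3 < qbar_star \<alpha>"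
proof -
  have steady: "(4*\<alpha> + 1)/(1 - q3) + (3 - 4*\<alpha>)/(1 - q1) < 8*(4*\<alpha> + 3)/3"
    using assms(7) by blast
  have "(2 < 4*\<alpha> + 1 \<and> 3*(4*\<alpha> + 1)*(1 - q3) + (3 - 4*\<alpha>)*(1 - q1) < 3)
      \<or> (4*\<alpha> + 1 \<le> 2 \<and> 6*(1 - q3) + 2*(1 - q1) < 3)"
    using assms(7) by (auto simp: algebra_simps)
  then have "3*(4*\<alpha> + 1)*(1 - q3) + (3 - 4*\<alpha>)*(1 - q1) < 3 \<and> 6*(1 - q3) + 2*(1 - q1) < 3"
    by (rule improvements_coincide[rotated 6]) (use assms steady in auto)
  then have quality: "(12*\<alpha> + 3)*q3 + (3 - 4*\<alpha>)*q1 > 8*\<alpha> + 3"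
    and churn: "6*q3 + 2*q1 > 5"
    by (simp_all add: algebra_simps)
  have "0 < Mtreat \<alpha> q1 q3"
    unfolding Mtreat_def using assms by (intro add_pos_pos divide_pos_pos) auto
  with quality churn steady assms show ?thesis
    by (simp add: qbar_gt_qbar_star_iff lambar_lt_lambar_star_iff Mtreat_lt_mstar_total_iff
                  Qtreat_lt_qbar_star_iff)
qed

end
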